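(* Let $N$ be a positive odd integer and let $\alpha>-1$, $\beta>-1$; put $\sigma=\alpha+\beta$. Let $P_n$, $0\le n\le N$, be the monic dual $-1$ Hahn polynomials and $y_s$ the grid defined in the context. Define weights, for $0\le s\le (N-1)/2$, $$w_{2s}=(-1)^s\frac{(-(N-1)/2)_s}{s!}\,\frac{(1/2+\alpha/2)_s\,(1+\sigma/2)_s}{(1/2+\beta/2)_s\,(N/2+3/2+\sigma/2)_s},$$ $$w_{2s+1}=(-1)^s\frac{(-(N-1)/2)_s}{s!}\,\frac{(1/2+\alpha/2)_{s+1}\,(1+\sigma/2)_s}{(1/2+\beta/2)_{s+1}\,(N/2+3/2+\sigma/2)_s}.$$ Then all $w_s$ ($0\le s\le N$) are well defined and strictly positive, and for all $0\le n,m\le N$, $$\sum_{s=0}^N w_s\,P_n(y_s)P_m(y_s)=\kappa_0\,u_1^{(-1)}\cdots u_n^{(-1)}\,\delta_{nm},\qquad \kappa_0=\sum_{s=0}^N w_s=\frac{(1+\sigma/2)_{(N+1)/2}}{((\beta+1)/2)_{(N+1)/2}}.$$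
   Context: $(c)_k=c(c+1)\cdots(c+k-1)$ is the Pochhammer symbol, $(c)_0=1$. For $N$ odd and $\sigma=\alpha+\beta$: $b_n^{(-1)}=-1-\alpha+\beta$ for $n$ even, $b_n^{(-1)}=-1+\alpha-\beta$ for $n$ odd; $u_n^{(-1)}=4n(N+1-n)$ for $n$ even, $u_n^{(-1)}=4(\alpha+n)(\beta+N+1-n)$ for $n$ odd. The monic dual $-1$ Hahn polynomials are defined by $P_{-1}=0$, $P_0=1$, $P_{n+1}(x)=(x-b_n^{(-1)})P_n(x)-u_n^{(-1)}P_{n-1}(x)$ for $n\ge0$. The grid is $y_s=(-1)^s(\sigma+2s+1)$, $s=0,1,\dots,N$. *)

theory Defs
  imports Complex_Main
begin

definition hb :: "real \<Rightarrow> real \<Rightarrow> nat \<Rightarrow> real" where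
  "hb \<alpha> \<beta> n = (if even n then -1 - \<alpha> + \<beta> else -1 + \<alpha> - \<beta>)"

definition hu :: "nat \<Rightarrow> real \<Rightarrow> real \<Rightarrow> nat \<Rightarrow> real" where
  "hu N \<alpha> \<beta> n = (if even n then 4 * real n * (real N + 1 - real n)
                    else 4 * (\<alpha> + real n) * (\<beta> + real N + 1 - real n))"

fun hP :: "nat \<Rightarrow> real \<Rightarrow> real \<Rightarrow> nat \<Rightarrow> real \<Rightarrow> real" where
  "hP N \<alpha> \<beta> 0 x = 1"
| "hP N \<alpha> \<beta> (Suc 0) x = x - hb \<alpha> \<beta> 0"
| "hP N \<alpha> \<beta> (Suc (Suc n)) x =
     (x - hb \<alpha> \<beta> (Suc n)) * hP N \<alpha> \<beta> (Suc n) x - hu N \<alpha> \<beta> (Suc n) * hP N \<alpha> \<beta> n x"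

definition hy :: "real \<Rightarrow> real \<Rightarrow> nat \<Rightarrow> real" where
  "hy \<alpha> \<beta> s = (-1) ^ s * (\<alpha> + \<beta> + 2 * real s + 1)"

definition hw :: "nat \<Rightarrow> real \<Rightarrow> real \<Rightarrow> nat \<Rightarrow> real" where
  "hw N \<alpha> \<beta> t = (let s = t div 2; \<sigma> = \<alpha> + \<beta> in
     (if even t then
        (-1) ^ s * pochhammer (- (real N - 1) / 2) s / fact s
        * (pochhammer (1/2 + \<alpha>/2) s * pochhammer (1 + \<sigma>/2) s)
        / (pochhammer (1/2 + \<beta>/2) s * pochhammer (real N / 2 + 3/2 + \<sigma>/2) s)
      else
        (-1) ^ s * pochhammer (- (real N - 1) / 2) s / fact s
        * (pochhammer (1/2 + \<alpha>/2) (s + 1) * pochhammer (1 + \<sigma>/2) s)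
        / (pochhammer (1/2 + \<beta>/2) (s + 1) * pochhammer (real N / 2 + 3/2 + \<sigma>/2) s)))"

end

theory Submission
  imports Defs
begin

text \<open>
  The proof has three layers.
  (1) A general fact: if monic polynomials given by a three-term recurrence have
      discrete "moments" sum_s w_s P_n(y_s) equal to kappa * delta_{n0} for n <= N, and
      P_{N+1} vanishes on the support, then they are orthogonal with squared norms
      kappa * u_1 ... u_n.
  (2) Even/odd decomposition: P_{2n}(y) = R_n(X) and P_{2n+1}(y) = (y + 1 + alpha - beta) S_n(X)
      with X = (y + 1)^2.  On the grid, X takes the values X_k = (sigma + 4k + 2)^2 at the
      two points y_{2k}, y_{2k+1}.  The odd moments vanish because the two weights of
      each pair cancel the linear factor; the even moments reduce to a sum over the J+1
      nodes X_k with the pair weights nu_k = w_{2k} + w_{2k+1}.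
  (3) Expanding R_n in the Newton basis of the nodes X_k (explicit coefficients), the
      node moments m_j of the Newton basis satisfy m_{j+1} = -t_j m_j, proved by a
      summation by parts driven by a detailed-balance relation for nu_k.  This gives
      the vanishing of the even moments via the alternating binomial sum, the vanishing
      of R_{J+1} at the nodes, and the closed form of kappa_0 = m_0.
\<close>

text \<open>
  Layer (1): orthogonality from moments.  Lowering the second index with the
  recurrence reduces every mixed moment to the single moments.
\<close>

lemma orthogonality_from_moments:
  fixes p :: "nat \<Rightarrow> real \<Rightarrow> real" and b u :: "nat \<Rightarrow> real"
    and w y :: "'s \<Rightarrow> real" and S :: "'s set" and \<kappa> :: real
  assumes p0: "\<And>x. p 0 x = 1"
    and rec: "\<And>n x. p (Suc n) x = (x - b n) * p n x - u n * p (n - 1) x"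
    and u0: "u 0 = 0"
    and moments: "\<And>n. n \<le> N \<Longrightarrow> (\<Sum>s\<in>S. w s * p n (y s)) = (if n = 0 then \<kappa> else 0)"
    and vanish: "\<And>s. s \<in> S \<Longrightarrow> p (Suc N) (y s) = 0"
    and "n \<le> N" and "m \<le> N"
  shows "(\<Sum>s\<in>S. w s * p n (y s) * p m (y s)) = (if n = m then \<kappa> * (\<Prod>k=1..n. u k) else 0)"
proof -
  define M where "M n m = (\<Sum>s\<in>S. w s * p n (y s) * p m (y s))" for n m
  define G where "G n m = (if n = m then \<kappa> * (\<Prod>k=1..n. u k) else 0)" for n m
  have step: "M n (Suc m) = M (Suc n) m + (b n - b m) * M n m + u n * M (n - 1) m - u m * M n (m - 1)" for n m
    unfolding M_def rec[of m] rec[of n]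
    by (simp add: sum.distrib sum_subtractf sum_distrib_left algebra_simps)
  have "\<forall>n \<le> Suc N. M n m = (if n = Suc N then 0 else G n m)" if "m \<le> N" for m
    using that
  proof (induction m rule: less_induct)
    case (less m)
    show ?case
    proof (intro allI impI)
      fix n assume n: "n \<le> Suc N"
      consider "n = Suc N" | "m = 0" "n \<le> N" | m' where "m = Suc m'" "n \<le> N"
        using n by (cases m) (auto simp: le_Suc_eq)
      then show "M n m = (if n = Suc N then 0 else G n m)"
      proof cases
        case 1
        then show ?thesis by (simp add: M_def vanish)
      next
        case 2
        then show ?thesis using moments[of n] by (simp add: M_def G_def p0)
      next
        case 3
        have IH: "M k m' = G k m'" "M k (m' - 1) = G k (m' - 1)" if "k \<le> Suc N" for k
          using less.IH[of m'] less.IH[of "m' - 1"] less.prems that 3 by (auto simp: G_def)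
        have "M n m = M (Suc n) m' + (b n - b m') * M n m' + u n * M (n - 1) m' - u m' * M n (m' - 1)"
          using 3 step by simp
        also have "\<dots> = G (Suc n) m' + (b n - b m') * G n m' + u n * G (n - 1) m' - u m' * G n (m' - 1)"
          using 3 IH by simp
        also have "\<dots> = G n m"
          using 3 by (cases n; cases m') (auto simp: G_def u0 prod.nat_ivl_Suc')
        finally show ?thesis using 3 by simp
      qed
    qed
  qed
  then show ?thesis using assms(6,7) by (simp add: M_def G_def)
qed

text \<open>
  The coefficients b_n alternate between -1 - c and
  -1 + c with c = alpha - beta, so the even and odd polynomials are Rq(X) and
  (y + 1 + c) Sq(X) with X = (y + 1)^2, where Rq and Sq are defined by coupled
  recurrences driven by an arbitrary sequence u.
\<close>

fun Rq :: "(nat \<Rightarrow> real) \<Rightarrow> real \<Rightarrow> nat \<Rightarrow> real \<Rightarrow> real" where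
  "Rq u c 0 X = 1"
| "Rq u c (Suc 0) X = X - c\<^sup>2 - u 1"
| "Rq u c (Suc (Suc n)) X = (X - c\<^sup>2 - u (2*n+2) - u (2*n+3)) * Rq u c (Suc n) X
     - u (2*n+2) * u (2*n+1) * Rq u c n X"

fun Sq :: "(nat \<Rightarrow> real) \<Rightarrow> real \<Rightarrow> nat \<Rightarrow> real \<Rightarrow> real" where
  "Sq u c 0 X = 1"
| "Sq u c (Suc n) X = Rq u c (Suc n) X - u (2*n+2) * Sq u c n X"

lemma Sq_mult: "(X - c\<^sup>2) * Sq u c n X = Rq u c (Suc n) X + u (2*n+1) * Rq u c n X"
proof (induction n)
  case 0
  then show ?case by simp
next
  case (Suc n)
  have "(X - c\<^sup>2) * Sq u c (Suc n) X
      = (X - c\<^sup>2) * Rq u c (Suc n) X - u (2*n+2) * ((X - c\<^sup>2) * Sq u c n X)"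
    by (simp add: algebra_simps)
  also have "\<dots> = (X - c\<^sup>2) * Rq u c (Suc n) X - u (2*n+2) * (Rq u c (Suc n) X + u (2*n+1) * Rq u c n X)"
    unfolding Suc.IH ..
  also have "\<dots> = Rq u c (Suc (Suc n)) X + u (2*n+3) * Rq u c (Suc n) X"
    by (simp add: algebra_simps)
  finally show ?case by (simp add: numeral_eq_Suc)
qed

lemma hP_even_odd:
  "hP N a b (2*n) y = Rq (hu N a b) (a - b) n ((y + 1)\<^sup>2)
   \<and> hP N a b (Suc (2*n)) y = (y + 1 + a - b) * Sq (hu N a b) (a - b) n ((y + 1)\<^sup>2)"
proof (induction n)
  case 0
  then show ?case by (simp add: hb_def)
next
  case (Suc n)
  let ?u = "hu N a b" and ?X = "(y + 1)\<^sup>2"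
  have P0: "hP N a b (2*n) y = Rq ?u (a - b) n ?X"
    and P1: "hP N a b (Suc (2*n)) y = (y + 1 + a - b) * Sq ?u (a - b) n ?X"
    using Suc.IH by auto
  have even: "hP N a b (2 * Suc n) y = Rq ?u (a - b) (Suc n) ?X"
  proof -
    have "hP N a b (2 * Suc n) y
        = (y - hb a b (Suc (2*n))) * hP N a b (Suc (2*n)) y - ?u (Suc (2*n)) * hP N a b (2*n) y"
      by (simp add: numeral_eq_Suc)
    also have "\<dots> = (?X - (a - b)\<^sup>2) * Sq ?u (a - b) n ?X - ?u (2*n+1) * Rq ?u (a - b) n ?X"
      unfolding P0 P1 by (simp add: hb_def power2_eq_square algebra_simps)
    also have "\<dots> = Rq ?u (a - b) (Suc n) ?X"
      by (simp add: Sq_mult)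
    finally show ?thesis .
  qed
  have "hP N a b (Suc (2 * Suc n)) y
      = (y - hb a b (2 * Suc n)) * hP N a b (2 * Suc n) y - ?u (2 * Suc n) * hP N a b (Suc (2*n)) y"
    by (simp add: numeral_eq_Suc)
  also have "\<dots> = (y + 1 + a - b) * (Rq ?u (a - b) (Suc n) ?X - ?u (2*n+2) * Sq ?u (a - b) n ?X)"
    unfolding even P1 by (simp add: hb_def algebra_simps)
  also have "\<dots> = (y + 1 + a - b) * Sq ?u (a - b) (Suc n) ?X"
    by simp
  finally show ?case using even by simp
qed

lemma Rq_three_term:
  assumes "u 0 = 0"
  shows "Rq u c (Suc m) X
       = (X - (c\<^sup>2 + u (2*m) + u (2*m+1))) * Rq u c m X - u (2*m) * u (2*m - 1) * Rq u c (m - 1) X"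
  using assms by (cases m) (simp_all add: numeral_eq_Suc)

text \<open>
  The grid points y_{2k} and y_{2k+1} both give the node
  X_k = node a b k.  For N = 2J + 1, Rq_n has explicit Newton coefficients
  ncoeff n j = binom(n, j) * t_j ... t_{n-1}, where t_i = tfac a J i; rdiag and roff are
  the recurrence coefficients of Rq written in closed form.
\<close>

definition node :: "real \<Rightarrow> real \<Rightarrow> real \<Rightarrow> real" where
  "node a b x = (a + b + 4*x + 2)\<^sup>2"

definition newton_basis :: "real \<Rightarrow> real \<Rightarrow> nat \<Rightarrow> real \<Rightarrow> real" where
  "newton_basis a b j X = (\<Prod>i<j. X - node a b (real i))"

definition tfac :: "real \<Rightarrow> nat \<Rightarrow> nat \<Rightarrow> real" where
  "tfac a J i = 8 * (a + 1 + 2 * real i) * (real i - real J)"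

definition ncoeff :: "real \<Rightarrow> nat \<Rightarrow> nat \<Rightarrow> nat \<Rightarrow> real" where
  "ncoeff a J n j = real (n choose j) * (\<Prod>i\<in>{j..<n}. tfac a J i)"

definition rdiag :: "real \<Rightarrow> real \<Rightarrow> nat \<Rightarrow> nat \<Rightarrow> real" where
  "rdiag a b J m = (a - b)\<^sup>2 + 8 * real m * (2 * real J + 2 - 2 * real m)
                   + 4 * (a + 2 * real m + 1) * (b + 2 * real J + 1 - 2 * real m)"

definition roff :: "real \<Rightarrow> real \<Rightarrow> nat \<Rightarrow> nat \<Rightarrow> real" where
  "roff a b J m = - 8 * real m * (b + 2 * real J + 3 - 2 * real m) * tfac a J (m - 1)"

lemma newton_basis_Suc:
  "newton_basis a b (Suc j) X = (X - node a b (real j)) * newton_basis a b j X"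
  by (simp add: newton_basis_def)

lemma hu_rdiag:
  assumes "N = Suc (2*J)"
  shows "(a - b)\<^sup>2 + hu N a b (2*m) + hu N a b (2*m+1) = rdiag a b J m"
  using assms by (simp add: hu_def rdiag_def algebra_simps)

lemma hu_roff:
  assumes "N = Suc (2*J)"
  shows "hu N a b (2*m) * hu N a b (2*m - 1) = roff a b J m"
proof (cases m)
  case 0
  then show ?thesis by (simp add: hu_def roff_def)
next
  case (Suc k)
  have "2*m - 1 = Suc (2*k)" using Suc by simp
  then show ?thesis using assms Suc by (simp add: hu_def roff_def tfac_def algebra_simps)
qed

lemma binomial_ratios:
  assumes "j \<le> m"
  shows "(real m + 1 - real j) * real (Suc m choose j) = (real m + 1) * real (m choose j)"
    and "(real m + 1 - real j) * (if j = 0 then 0 else real (m choose (j - 1))) = real j * real (m choose j)"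
    and "real m * real ((m - 1) choose j) = (real m - real j) * real (m choose j)"
proof -
  show "(real m + 1 - real j) * real (Suc m choose j) = (real m + 1) * real (m choose j)"
  proof -
    have "real (Suc m - j) * real (Suc m choose j) = real (Suc m) * real (m choose j)"
      by (metis binomial_absorb_comp diff_Suc_1 of_nat_mult)
    then show ?thesis using assms by (simp add: add.commute)
  qed
  show "(real m + 1 - real j) * (if j = 0 then 0 else real (m choose (j - 1))) = real j * real (m choose j)"
  proof (cases j)
    case (Suc k)
    have "real (m - k) * real (m choose k) = real (Suc k) * real (m choose Suc k)"
      by (metis binomial_absorb_comp binomial_absorption of_nat_mult)
    then show ?thesis using Suc assms by (simp add: add.commute)
  qed simp
  show "real m * real ((m - 1) choose j) = (real m - real j) * real (m choose j)"
  proof -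
    have "real m * real ((m - 1) choose j) = real (m - j) * real (m choose j)"
      by (metis binomial_absorb_comp of_nat_mult)
    then show ?thesis using assms by simp
  qed
qed

text \<open>
  The scalar identity behind the coefficient recurrence: a polynomial identity in m and j,
  combined with the absorption identities for binomial coefficients.
\<close>

lemma ncoeff_scalar:
  assumes "j \<le> m"
  shows "real (Suc m choose j) * tfac a J m
       = (if j = 0 then 0 else real (m choose (j - 1))) * tfac a J (j - 1)
         + (node a b (real j) - rdiag a b J m) * real (m choose j)
         + 8 * real m * (b + 2 * real J + 3 - 2 * real m) * real ((m - 1) choose j)"
proof -
  define Z where "Z = b + 2 * real J + 3 - 2 * real m"
  have d: "real m + 1 - real j > 0" using assms by simp
  have core: "(real m + 1) * tfac a J m = real j * tfac a J (j - 1)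
      + (real m + 1 - real j) * (node a b (real j) - rdiag a b J m)
      + 8 * (real m + 1 - real j) * (real m - real j) * Z"
    by (cases j) (simp_all add: tfac_def node_def rdiag_def Z_def power2_eq_square algebra_simps)
  note B = binomial_ratios[OF assms]
  define c1 where "c1 = (if j = 0 then 0 else real (m choose (j - 1)))"
  define W where "W = node a b (real j) - rdiag a b J m"
  have "(real m + 1 - real j) * (c1 * tfac a J (j - 1) + W * real (m choose j)
          + 8 * real m * Z * real ((m - 1) choose j))
      = ((real m + 1 - real j) * c1) * tfac a J (j - 1) + (real m + 1 - real j) * W * real (m choose j)
          + 8 * Z * (real m * real ((m - 1) choose j)) * (real m + 1 - real j)"
    by (simp add: algebra_simps)
  also have "\<dots> = real (m choose j) * (real j * tfac a J (j - 1) + (real m + 1 - real j) * W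
          + 8 * (real m + 1 - real j) * (real m - real j) * Z)"
    unfolding B(2)[folded c1_def] B(3) by (simp add: algebra_simps)
  also have "\<dots> = real (m choose j) * ((real m + 1) * tfac a J m)"
    by (simp only: core[folded W_def])
  also have "\<dots> = ((real m + 1 - real j) * real (Suc m choose j)) * tfac a J m"
    unfolding B(1) by (simp add: algebra_simps)
  finally show ?thesis using d unfolding Z_def c1_def W_def by simp
qed

lemma ncoeff_top: "n \<le> j \<Longrightarrow> ncoeff a J n j = (if j = n then 1 else 0)"
  by (simp add: ncoeff_def)

text \<open>
  The Newton coefficients satisfy the recurrence of Rq, rewritten for the Newton basis
  via X * E_j = E_{j+1} + X_j * E_j.
\<close>

lemma ncoeff_rec:
  "ncoeff a J (Suc m) j = (if j = 0 then 0 else ncoeff a J m (j - 1))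
     + (node a b (real j) - rdiag a b J m) * ncoeff a J m j - roff a b J m * ncoeff a J (m - 1) j"
proof (cases "j \<le> m")
  case False
  then show ?thesis by (auto simp: ncoeff_top)
next
  case True
  define P where "P = (\<Prod>i\<in>{j..<m}. tfac a J i)"
  define Z where "Z = b + 2 * real J + 3 - 2 * real m"
  have lhs: "ncoeff a J (Suc m) j = real (Suc m choose j) * tfac a J m * P"
    unfolding ncoeff_def P_def using True by (simp add: prod.atLeastLessThan_Suc)
  have lower: "(if j = 0 then 0 else ncoeff a J m (j - 1))
      = (if j = 0 then 0 else real (m choose (j - 1))) * tfac a J (j - 1) * P"
  proof (cases j)
    case (Suc k)
    then have "{k..<m} = insert k {j..<m}" using True by auto
    then show ?thesis unfolding ncoeff_def P_def using Suc by simp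
  qed simp
  have same: "ncoeff a J m j = real (m choose j) * P"
    unfolding ncoeff_def P_def ..
  have prev: "roff a b J m * ncoeff a J (m - 1) j = - 8 * real m * Z * real ((m - 1) choose j) * P"
  proof (cases "j < m")
    case True
    then have "P = (\<Prod>i\<in>{j..<m - 1}. tfac a J i) * tfac a J (m - 1)"
      unfolding P_def using prod.atLeastLessThan_Suc[of j "m - 1" "tfac a J"] by simp
    then show ?thesis unfolding ncoeff_def roff_def Z_def by simp
  next
    case False
    then have "m = 0 \<or> (m - 1) choose j = 0" using \<open>j \<le> m\<close> by auto
    then show ?thesis unfolding ncoeff_def roff_def by auto
  qed
  show ?thesis
    unfolding lhs lower same prev Z_def
    using arg_cong[OF ncoeff_scalar[OF True, of a J b], of "\<lambda>x. x * P"]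
    by (simp add: algebra_simps)
qed

lemma newton_sum_rec:
  assumes "Suc m < L"
  shows "(\<Sum>j<L. ncoeff a J (Suc m) j * newton_basis a b j X)
       = (X - rdiag a b J m) * (\<Sum>j<L. ncoeff a J m j * newton_basis a b j X)
         - roff a b J m * (\<Sum>j<L. ncoeff a J (m - 1) j * newton_basis a b j X)"
proof -
  define E where "E j = newton_basis a b j X" for j
  obtain L' where L: "L = Suc L'" using assms by (cases L) auto
  have shift: "(\<Sum>j<L. (if j = 0 then 0 else ncoeff a J m (j - 1)) * E j)
      = (\<Sum>j<L. ncoeff a J m j * ((X - node a b (real j)) * E j))"
  proof -
    have "(\<Sum>j<L. (if j = 0 then 0 else ncoeff a J m (j - 1)) * E j) = (\<Sum>j<L'. ncoeff a J m j * E (Suc j))"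
      unfolding L sum.lessThan_Suc_shift by simp
    also have "\<dots> = (\<Sum>j<L. ncoeff a J m j * E (Suc j))"
      using assms L by (simp add: ncoeff_top)
    finally show ?thesis by (simp add: E_def newton_basis_Suc)
  qed
  have "(\<Sum>j<L. ncoeff a J (Suc m) j * E j)
      = (\<Sum>j<L. (if j = 0 then 0 else ncoeff a J m (j - 1)) * E j)
        + (\<Sum>j<L. (node a b (real j) - rdiag a b J m) * ncoeff a J m j * E j)
        - roff a b J m * (\<Sum>j<L. ncoeff a J (m - 1) j * E j)"
    unfolding ncoeff_rec[of a J m _ b]
    by (simp add: sum.distrib sum_subtractf sum_distrib_left algebra_simps)
  also have "\<dots> = (X - rdiag a b J m) * (\<Sum>j<L. ncoeff a J m j * E j)
        - roff a b J m * (\<Sum>j<L. ncoeff a J (m - 1) j * E j)"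
    unfolding shift by (simp add: sum.distrib sum_subtractf sum_distrib_left algebra_simps)
  finally show ?thesis unfolding E_def .
qed

text \<open>The Newton expansion of Rq (all coefficients beyond n vanish, so any L > n works).\<close>

lemma Rq_newton:
  assumes N: "N = Suc (2*J)" and "n < L"
  shows "Rq (hu N a b) (a - b) n X = (\<Sum>j<L. ncoeff a J n j * newton_basis a b j X)"
  using assms(2)
proof (induction n rule: less_induct)
  case (less n)
  show ?case
  proof (cases n)
    case 0
    have "(\<Sum>j<L. ncoeff a J 0 j * newton_basis a b j X) = (\<Sum>j<L. if j = 0 then 1 else 0)"
      by (rule sum.cong) (auto simp: ncoeff_top newton_basis_def)
    then show ?thesis using 0 less.prems by simp
  next
    case (Suc m)
    have hu0: "hu N a b 0 = 0" by (simp add: hu_def)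
    show ?thesis
      unfolding Suc Rq_three_term[of "hu N a b", OF hu0] hu_rdiag[OF N] hu_roff[OF N]
        newton_sum_rec[OF less.prems[unfolded Suc]]
      using less.IH[of m] less.IH[of "m - 1"] less.prems Suc by simp
  qed
qed

text \<open>
  The Newton basis evaluated at the nodes, as a function of the node index x.
  psig a b = 1 + sigma/2 appears in all node differences.
\<close>

definition psig :: "real \<Rightarrow> real \<Rightarrow> real" where
  "psig a b = 1 + (a + b) / 2"

definition enode :: "real \<Rightarrow> real \<Rightarrow> nat \<Rightarrow> real \<Rightarrow> real" where
  "enode a b j x = newton_basis a b j (node a b x)"

text \<open>Node differences factor, which makes E_j at the nodes a product of linear factors.\<close>

lemma node_diff: "node a b x - node a b y = 16 * (x - y) * (x + y + psig a b)"
  unfolding node_def psig_def by (simp add: power2_eq_square field_simps)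

lemma enode_0 [simp]: "enode a b 0 x = 1"
  by (simp add: enode_def newton_basis_def)

lemma enode_Suc: "enode a b (Suc j) x = enode a b j x * (16 * (x - real j) * (x + real j + psig a b))"
  unfolding enode_def newton_basis_Suc node_diff by simp

lemma enode_vanish: "i < j \<Longrightarrow> enode a b j (real i) = 0"
  unfolding enode_def newton_basis_def by (rule prod_zero) auto

lemma enode_up:
  "(x + psig a b) * enode a b (Suc j) (x + 1)
     = 16 * (x + 1) * (x + real j + psig a b) * (x + real j + 1 + psig a b) * enode a b j x"
proof (induction j)
  case 0
  then show ?case by (simp add: enode_Suc algebra_simps)
next
  case (Suc j)
  have "(x + psig a b) * enode a b (Suc (Suc j)) (x + 1)
      = ((x + psig a b) * enode a b (Suc j) (x + 1)) * (16 * (x - real j) * (x + real j + 2 + psig a b))"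
    by (simp add: enode_Suc[of a b "Suc j"] algebra_simps)
  also have "\<dots> = 16 * (x + 1) * (x + real (Suc j) + psig a b) * (x + real (Suc j) + 1 + psig a b)
                   * enode a b (Suc j) x"
    unfolding Suc.IH enode_Suc[of a b j x] by (simp add: algebra_simps)
  finally show ?case .
qed

lemma enode_down:
  "x * enode a b (Suc j) (x - 1) = 16 * (x - real j - 1) * (x - real j) * (x + psig a b - 1) * enode a b j x"
proof (induction j)
  case 0
  then show ?case by (simp add: enode_Suc algebra_simps)
next
  case (Suc j)
  have "x * enode a b (Suc (Suc j)) (x - 1)
      = (x * enode a b (Suc j) (x - 1)) * (16 * (x - real j - 2) * (x + real j + psig a b))"
    by (simp add: enode_Suc[of a b "Suc j"] algebra_simps)
  also have "\<dots> = 16 * (x - real (Suc j) - 1) * (x - real (Suc j)) * (x + psig a b - 1) * enode a b (Suc j) x"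
    unfolding Suc.IH enode_Suc[of a b j x] by (simp add: algebra_simps)
  finally show ?case .
qed

text \<open>
  The rational identity underlying the difference equation below; after the shift
  relations are inserted it is a polynomial identity.
\<close>

lemma difference_identity:
  fixes p d g x J j E F1 F0 Fm :: real
  assumes pd: "g = p + d" and g: "g > 0" and x: "x \<ge> 1"
    and F1: "(x + g) * F1 = 16 * (x + 1) * (x + j + g) * (x + j + 1 + g) * E"
    and F0: "F0 = 16 * (x - j) * (x + j + g) * E"
    and Fm: "x * Fm = 16 * (x - j - 1) * (x - j) * (x + g - 1) * E"
  shows "(p + x) * (x + g) * (J - x) / ((2*x + g) * (2*x + g + 1)) * (F1 - F0)
       - x * (x + g + J) * (x + d) / ((2*x + g - 1) * (2*x + g)) * (F0 - Fm)
       = - (j + 1) * (F0 + 16 * (p + j) * (j - J) * E)"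
proof -
  define P1 where "P1 = 16 * (x + 1) * (x + j + g) * (x + j + 1 + g)"
  define P0 where "P0 = 16 * (x - j) * (x + j + g)"
  define Pm where "Pm = 16 * (x - j - 1) * (x - j) * (x + g - 1)"
  define D where "D = (2*x + g - 1) * (2*x + g) * (2*x + g + 1)"
  have nz: "2*x + g \<noteq> 0" "2*x + g + 1 \<noteq> 0" "2*x + g - 1 \<noteq> 0" "D \<noteq> 0"
    using g x unfolding D_def by auto
  have fracs: "A / (u * v) - B / (w * u) = (A * w - B * v) / (w * u * v)"
    if "u \<noteq> 0" "v \<noteq> 0" "w \<noteq> 0" for A B u v w :: real
    using that by (simp add: field_simps)
  have T1: "(x + g) * (F1 - F0) = (P1 - (x + g) * P0) * E"
    using F1 unfolding F0 P1_def P0_def by (simp add: algebra_simps)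
  have T2: "x * (F0 - Fm) = (x * P0 - Pm) * E"
    using Fm unfolding F0 P0_def Pm_def by (simp add: algebra_simps)
  have poly: "(p + x) * (J - x) * (P1 - (x + g) * P0) * (2*x + g - 1)
      - (x + g + J) * (x + d) * (x * P0 - Pm) * (2*x + g + 1)
      = - (j + 1) * (P0 + 16 * (p + j) * (j - J)) * D"
    unfolding P1_def P0_def Pm_def D_def pd by algebra
  have "(p + x) * (x + g) * (J - x) / ((2*x + g) * (2*x + g + 1)) * (F1 - F0)
      - x * (x + g + J) * (x + d) / ((2*x + g - 1) * (2*x + g)) * (F0 - Fm)
      = (p + x) * (J - x) * ((x + g) * (F1 - F0)) / ((2*x + g) * (2*x + g + 1))
      - (x + g + J) * (x + d) * (x * (F0 - Fm)) / ((2*x + g - 1) * (2*x + g))"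
    by (simp add: ac_simps)
  also have "\<dots> = (p + x) * (J - x) * (P1 - (x + g) * P0) * E / ((2*x + g) * (2*x + g + 1))
      - (x + g + J) * (x + d) * (x * P0 - Pm) * E / ((2*x + g - 1) * (2*x + g))"
    unfolding T1 T2 by (simp add: ac_simps)
  also have "\<dots> = E * (((p + x) * (J - x) * (P1 - (x + g) * P0) * (2*x + g - 1)
      - (x + g + J) * (x + d) * (x * P0 - Pm) * (2*x + g + 1)) / D)"
    using fracs[OF nz(1-3), of "(p + x) * (J - x) * (P1 - (x + g) * P0) * E"
        "(x + g + J) * (x + d) * (x * P0 - Pm) * E"]
    unfolding D_def by (simp add: algebra_simps)
  also have "\<dots> = E * (- (j + 1) * (P0 + 16 * (p + j) * (j - J)))"
    unfolding poly using nz(4) by simp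
  also have "\<dots> = - (j + 1) * (F0 + 16 * (p + j) * (j - J) * E)"
    using nz(4) unfolding F0 P0_def by (simp add: algebra_simps)
  finally show ?thesis .
qed

text \<open>Forward and backward rates of the second-order difference operator on the node index.\<close>

definition fwd :: "real \<Rightarrow> real \<Rightarrow> nat \<Rightarrow> real \<Rightarrow> real" where
  "fwd a b J x = ((a + 1) / 2 + x) * (x + psig a b) * (real J - x)
                 / ((2 * x + psig a b) * (2 * x + psig a b + 1))"

definition bwd :: "real \<Rightarrow> real \<Rightarrow> nat \<Rightarrow> real \<Rightarrow> real" where
  "bwd a b J x = x * (x + psig a b + real J) * (x + (b + 1) / 2)
                 / ((2 * x + psig a b - 1) * (2 * x + psig a b))"

text \<open>
  The difference operator maps E_{j+1} to a combination of E_{j+1} and E_j; this is the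
  engine of the moment recursion.  At the left end only the forward part survives.
\<close>

lemma enode_difference_boundary:
  assumes g: "psig a b > 0"
  shows "fwd a b J 0 * enode a b (Suc j) 1 = - (real j + 1) * (tfac a J j * enode a b j 0)"
proof (cases j)
  case 0
  have "enode a b 1 1 = 16 * (1 + psig a b)"
    using enode_Suc[of a b 0 1] by simp
  moreover have "fwd a b J 0 = (a + 1) / 2 * real J / (psig a b + 1)"
  proof -
    have "fwd a b J 0 = ((a + 1) / 2 * real J) * psig a b / ((psig a b + 1) * psig a b)"
      unfolding fwd_def by (simp add: ac_simps)
    then show ?thesis using g by simp
  qed
  moreover have "psig a b + 1 > 0" using g by simp
  ultimately show ?thesis using 0 by (simp add: tfac_def field_simps)
next
  case (Suc i)
  then have "enode a b (Suc j) 1 = 0" "enode a b j 0 = 0"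
    using enode_vanish[of 1 "Suc j" a b] enode_vanish[of 0 j a b] by simp_all
  then show ?thesis by simp
qed

lemma enode_difference:
  assumes g: "psig a b > 0"
  shows "fwd a b J (real k) * (enode a b (Suc j) (real (Suc k)) - enode a b (Suc j) (real k))
       - bwd a b J (real k) * (enode a b (Suc j) (real k) - enode a b (Suc j) (real (k - 1)))
       = - (real j + 1) * (enode a b (Suc j) (real k) + tfac a J j * enode a b j (real k))"
proof (cases k)
  case 0
  have "enode a b (Suc j) 0 = 0"
    using enode_vanish[of 0 "Suc j" a b] by simp
  then show ?thesis using 0 enode_difference_boundary[OF g, of J j] by (simp add: bwd_def)
next
  case (Suc k')
  define x where "x = real k"
  define p where "p = (a + 1) / 2"
  define d where "d = (b + 1) / 2"
  have x: "x \<ge> 1" "real (Suc k) = x + 1" "real (k - 1) = x - 1"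
    unfolding x_def using Suc by auto
  have "fwd a b J x * (enode a b (Suc j) (x + 1) - enode a b (Suc j) x)
      - bwd a b J x * (enode a b (Suc j) x - enode a b (Suc j) (x - 1))
      = - (real j + 1) * (enode a b (Suc j) x + 16 * (p + real j) * (real j - real J) * enode a b j x)"
    unfolding fwd_def bwd_def p_def[symmetric] d_def[symmetric]
  proof (rule difference_identity[OF _ g x(1)])
    show "psig a b = p + d" unfolding psig_def p_def d_def by (simp add: field_simps)
  qed (use enode_up[of x a b j] enode_down[of x a b j] in \<open>simp_all add: enode_Suc[of a b j x] algebra_simps\<close>)
  moreover have "16 * (p + real j) * (real j - real J) = tfac a J j"
    unfolding p_def tfac_def by (simp add: field_simps)
  ultimately show ?thesis unfolding x(2,3) x_def by simp
qed

lemma summation_by_parts: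
  fixes \<nu> B D F :: "nat \<Rightarrow> real"
  assumes balance: "\<And>k. k < J \<Longrightarrow> \<nu> k * B k = \<nu> (Suc k) * D (Suc k)"
    and "B J = 0" and "D 0 = 0"
  shows "(\<Sum>k\<le>J. \<nu> k * (B k * (F (Suc k) - F k) - D k * (F k - F (k - 1)))) = 0"
proof -
  have "(\<Sum>k\<le>J. \<nu> k * D k * (F k - F (k - 1)))
      = (\<Sum>k<J. \<nu> (Suc k) * D (Suc k) * (F (Suc k) - F k))"
    using \<open>D 0 = 0\<close> by (simp only: sum.atMost_shift) simp
  also have "\<dots> = (\<Sum>k<J. \<nu> k * B k * (F (Suc k) - F k))"
    using balance by simp
  also have "\<dots> = (\<Sum>k\<le>J. \<nu> k * B k * (F (Suc k) - F k))"
    using \<open>B J = 0\<close> by (simp add: lessThan_Suc_atMost[symmetric])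
  finally show ?thesis
    by (simp add: right_diff_distrib sum_subtractf mult.assoc)
qed

lemma choose_Suc_real: "real (J choose Suc k) = real (J choose k) * (real J - real k) / (real k + 1)"
proof (cases "k \<le> J")
  case True
  have "real (Suc k) * real (J choose Suc k) = real (J - k) * real (J choose k)"
    by (metis binomial_absorb_comp binomial_absorption of_nat_mult)
  then show ?thesis using True by (simp add: field_simps)
qed (simp add: binomial_eq_0)

text \<open>
  The pair weights nu_k = w_{2k} + w_{2k+1} in closed form, and the moments of the Newton
  basis with respect to them.
\<close>

definition wnum :: "real \<Rightarrow> real \<Rightarrow> nat \<Rightarrow> real" where
  "wnum a b k = pochhammer ((a + 1) / 2) k * pochhammer (psig a b) k"

definition wden :: "nat \<Rightarrow> real \<Rightarrow> real \<Rightarrow> nat \<Rightarrow> real" where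
  "wden J a b k = pochhammer ((b + 1) / 2) k * pochhammer (real J + 1 + psig a b) k"

definition nu :: "nat \<Rightarrow> real \<Rightarrow> real \<Rightarrow> nat \<Rightarrow> real" where
  "nu J a b k = real (J choose k) * wnum a b k / wden J a b k
                * ((2 * real k + psig a b) / ((b + 1) / 2 + real k))"

definition moment :: "nat \<Rightarrow> real \<Rightarrow> real \<Rightarrow> nat \<Rightarrow> real" where
  "moment J a b j = (\<Sum>k\<le>J. nu J a b k * enode a b j (real k))"

lemma moment_top: "moment J a b J = nu J a b J * enode a b J (real J)"
proof -
  have "moment J a b J = (\<Sum>k\<in>{J}. nu J a b k * enode a b J (real k))"
    unfolding moment_def by (rule sum.mono_neutral_right) (auto simp: enode_vanish)
  then show ?thesis by simp
qed

text \<open>The two products that appear when m_J is computed in two ways.\<close>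

lemma tfac_prod: "(\<Prod>i<J. - tfac a J i) = pochhammer ((a + 1) / 2) J * (\<Prod>i<J. 16 * (real J - real i))"
proof -
  have "(\<Prod>i<J. - tfac a J i) = (\<Prod>i<J. ((a + 1) / 2 + real i) * (16 * (real J - real i)))"
    by (rule prod.cong) (simp_all add: tfac_def field_simps)
  then show ?thesis unfolding pochhammer_prod lessThan_atLeast0 prod.distrib by simp
qed

lemma enode_diagonal:
  "enode a b J (real J) = (\<Prod>i<J. 16 * (real J - real i)) * pochhammer (real J + psig a b) J"
proof -
  have "enode a b J (real J) = (\<Prod>i<J. (16 * (real J - real i)) * (real J + psig a b + real i))"
    unfolding enode_def newton_basis_def by (rule prod.cong) (simp_all add: node_diff algebra_simps)
  then show ?thesis unfolding pochhammer_prod lessThan_atLeast0 prod.distrib by simp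
qed

context
  fixes a b :: real
  assumes a: "a > -1" and b: "b > -1"
begin

lemma params_pos: "(a + 1) / 2 > 0" "(b + 1) / 2 > 0" "psig a b > 0"
  unfolding psig_def using a b by (simp_all add: field_simps)

lemma wnum_pos: "wnum a b k > 0"
  unfolding wnum_def using params_pos by (simp add: pochhammer_pos)

lemma wden_pos: "wden J a b k > 0"
  unfolding wden_def using params_pos by (simp add: pochhammer_pos add_pos_nonneg)

lemma nu_balance: "nu J a b k * fwd a b J (real k) = nu J a b (Suc k) * bwd a b J (real (Suc k))"
proof -
  define p d g where "p = (a + 1) / 2" and "d = (b + 1) / 2" and "g = psig a b"
  define c W where "c = real (J choose k)" and "W = wnum a b k / wden J a b k"
  have pos: "d + real k > 0" "d + real k + 1 > 0" "g > 0" "wden J a b k > 0"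
    "2 * real k + g > 0" "2 * real k + g + 1 > 0" "real J + 1 + g + real k > 0"
    using params_pos wden_pos unfolding d_def g_def by (simp_all add: add_pos_nonneg)
  have nu_k: "nu J a b k = c * W * ((2 * real k + g) / (d + real k))"
    unfolding nu_def c_def W_def d_def g_def by simp
  have nu_Suc: "nu J a b (Suc k) = c * (real J - real k) / (real k + 1)
       * (W * ((p + real k) * (g + real k)) / ((d + real k) * (real J + 1 + g + real k)))
       * ((2 * real k + 2 + g) / (d + real k + 1))"
    unfolding nu_def wnum_def wden_def c_def W_def p_def d_def g_def choose_Suc_real pochhammer_Suc
    by (simp add: field_simps)
  have "nu J a b k * fwd a b J (real k)
      = c * W * (p + real k) * (real k + g) * (real J - real k) / ((d + real k) * (2 * real k + g + 1))"
    unfolding nu_k fwd_def p_def[symmetric] g_def[symmetric] using pos by (simp add: divide_simps)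
  also have "\<dots> = nu J a b (Suc k) * bwd a b J (real (Suc k))"
    unfolding nu_Suc bwd_def d_def[symmetric] g_def[symmetric] using pos
    by (simp add: divide_simps) (simp add: algebra_simps)
  finally show ?thesis .
qed

lemma moment_Suc: "moment J a b (Suc j) = - tfac a J j * moment J a b j"
proof -
  have "(\<Sum>k\<le>J. nu J a b k * (fwd a b J (real k) * (enode a b (Suc j) (real (Suc k)) - enode a b (Suc j) (real k))
        - bwd a b J (real k) * (enode a b (Suc j) (real k) - enode a b (Suc j) (real (k - 1))))) = 0"
    by (rule summation_by_parts, rule nu_balance) (simp_all add: fwd_def bwd_def)
  then have "(\<Sum>k\<le>J. nu J a b k * (- (real j + 1)
        * (enode a b (Suc j) (real k) + tfac a J j * enode a b j (real k)))) = 0"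
    unfolding enode_difference[OF params_pos(3)] .
  moreover have "(\<Sum>k\<le>J. nu J a b k * (- (real j + 1)
        * (enode a b (Suc j) (real k) + tfac a J j * enode a b j (real k))))
      = - (real j + 1) * (moment J a b (Suc j) + tfac a J j * moment J a b j)"
    unfolding moment_def sum_distrib_left sum.distrib[symmetric]
    by (rule sum.cong) (simp_all add: algebra_simps)
  ultimately have "- (real j + 1) * (moment J a b (Suc j) + tfac a J j * moment J a b j) = 0"
    by simp
  then show ?thesis by simp
qed

lemma moment_closed: "moment J a b j = moment J a b 0 * (\<Prod>i<j. - tfac a J i)"
  by (induction j) (simp_all add: moment_Suc)

text \<open>The node moments of Rq_n vanish for n >= 1, by the alternating binomial sum.\<close>

lemma Rq_moments_vanish:
  assumes N: "N = Suc (2*J)" and "n \<ge> 1"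
  shows "(\<Sum>k\<le>J. nu J a b k * Rq (hu N a b) (a - b) n (node a b (real k))) = 0"
proof -
  have "(\<Sum>k\<le>J. nu J a b k * Rq (hu N a b) (a - b) n (node a b (real k)))
      = (\<Sum>k\<le>J. \<Sum>j<Suc n. nu J a b k * (ncoeff a J n j * enode a b j (real k)))"
    unfolding Rq_newton[OF N lessI] enode_def by (simp only: sum_distrib_left)
  also have "\<dots> = (\<Sum>j<Suc n. ncoeff a J n j * moment J a b j)"
    unfolding moment_def by (subst sum.swap) (simp add: sum_distrib_left ac_simps)
  also have "\<dots> = (\<Sum>j\<le>n. moment J a b 0 * (\<Prod>i<n. tfac a J i) * ((-1) ^ j * real (n choose j)))"
  proof (rule sum.cong)
    fix j assume "j \<in> {..n}"
    then have "(\<Prod>i<j. tfac a J i) * (\<Prod>i\<in>{j..<n}. tfac a J i) = (\<Prod>i<n. tfac a J i)"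
      using prod.atLeastLessThan_concat[of 0 j n "tfac a J"] by (simp add: lessThan_atLeast0)
    then show "ncoeff a J n j * moment J a b j
        = moment J a b 0 * (\<Prod>i<n. tfac a J i) * ((-1) ^ j * real (n choose j))"
      unfolding ncoeff_def moment_closed[of J j] by (simp add: prod_uminus algebra_simps)
  qed (simp add: lessThan_Suc_atMost)
  also have "\<dots> = 0"
    using choose_alternating_sum[of n, where 'a = real] \<open>n \<ge> 1\<close> by (simp flip: sum_distrib_left)
  finally show ?thesis .
qed

text \<open>The total mass kappa_0 = m_0, computed by comparing m_J with the closed moment formula.\<close>

lemma total_mass: "moment J a b 0 = pochhammer (psig a b) (Suc J) / pochhammer ((b + 1) / 2) (Suc J)"
proof -
  define p d g G where "p = (a + 1) / 2" and "d = (b + 1) / 2" and "g = psig a b" and "G = real J + 1 + g"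
  define Z where "Z = (\<Prod>i<J. 16 * (real J - real i))"
  have "G > 0" using params_pos unfolding G_def g_def by simp
  then have pos: "Z > 0" "pochhammer p J > 0" "pochhammer d J > 0" "pochhammer G J > 0" "d + real J > 0"
    using params_pos unfolding Z_def p_def d_def
    by (auto intro!: prod_pos pochhammer_pos add_pos_nonneg)
  have t_prod: "(\<Prod>i<J. - tfac a J i) = pochhammer p J * Z"
    unfolding tfac_prod Z_def p_def ..
  have E_top: "enode a b J (real J) = Z * pochhammer (real J + g) J"
    unfolding enode_diagonal Z_def g_def ..
  have shift: "pochhammer (real J + g) J * (2 * real J + g) = (real J + g) * pochhammer G J"
    using pochhammer_Suc[of "real J + g" J] pochhammer_rec[of "real J + g" J]
    unfolding G_def by (simp add: algebra_simps)
  have "moment J a b 0 * (pochhammer p J * Z) = moment J a b J"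
    unfolding moment_closed[of J J] t_prod ..
  also have "\<dots> = pochhammer p J * pochhammer g J / (pochhammer d J * pochhammer G J * (d + real J)) * Z
      * (pochhammer (real J + g) J * (2 * real J + g))"
    unfolding moment_top nu_def wnum_def wden_def E_top p_def d_def g_def G_def
    by (simp add: algebra_simps)
  also have "\<dots> = (pochhammer p J * Z) * (pochhammer g (Suc J) / pochhammer d (Suc J))"
    unfolding shift pochhammer_Suc using pos by (simp add: divide_simps)
  finally have "(pochhammer p J * Z) * moment J a b 0
      = (pochhammer p J * Z) * (pochhammer g (Suc J) / pochhammer d (Suc J))"
    by (simp only: mult.commute)
  moreover have "pochhammer p J * Z \<noteq> 0" using pos by simp
  ultimately show ?thesis unfolding g_def d_def by (metis mult_cancel_left)
qed

end

text \<open>Rq_{J+1} vanishes at all nodes: every Newton coefficient contains t_J = 0 except the last,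
  whose basis polynomial vanishes at the nodes.\<close>

lemma Rq_vanish:
  assumes N: "N = Suc (2*J)" and "k \<le> J"
  shows "Rq (hu N a b) (a - b) (Suc J) (node a b (real k)) = 0"
proof -
  have "ncoeff a J (Suc J) j * newton_basis a b j (node a b (real k)) = 0" if "j < Suc (Suc J)" for j
  proof (cases "j \<le> J")
    case True
    have "(\<Prod>i\<in>{j..<Suc J}. tfac a J i) = 0"
      by (rule prod_zero) (use True in \<open>auto simp: tfac_def\<close>)
    then show ?thesis by (simp add: ncoeff_def)
  next
    case False
    then have "k < j" using that \<open>k \<le> J\<close> by simp
    then show ?thesis using enode_vanish[of k j a b] by (simp add: enode_def)
  qed
  then show ?thesis unfolding Rq_newton[OF N lessI] by (intro sum.neutral) simp
qed

lemma sum_pairs: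
  assumes "N = Suc (2*J)"
  shows "(\<Sum>s = 0..N. f s) = (\<Sum>k\<le>J. f (2*k) + f (Suc (2*k)))"
  using assms by (induction J arbitrary: N) (simp_all add: atLeast0AtMost add.assoc)

lemma grid_node:
  "(hy a b (2*k) + 1)\<^sup>2 = node a b (real k)" "(hy a b (Suc (2*k)) + 1)\<^sup>2 = node a b (real k)"
  unfolding hy_def node_def by (simp_all add: power2_eq_square algebra_simps)

lemma weight_even:
  assumes "N = Suc (2*J)"
  shows "hw N a b (2*k) = real (J choose k) * wnum a b k / wden J a b k"
proof -
  have binom: "(- 1) ^ k * pochhammer (- real J) k / fact k = real (J choose k)"
    by (simp add: binomial_gbinomial gbinomial_pochhammer)
  have params: "- (real N - 1) / 2 = - real J" "real N / 2 + 3/2 + (a + b) / 2 = real J + 1 + psig a b"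
    "1/2 + a/2 = (a + 1) / 2" "1/2 + b/2 = (b + 1) / 2" "1 + (a + b) / 2 = psig a b"
    using assms by (simp_all add: psig_def field_simps)
  show ?thesis
    unfolding hw_def Let_def params wnum_def wden_def using binom by simp
qed

lemma weight_odd:
  "hw N a b (Suc (2*k)) = hw N a b (2*k) * (((a + 1) / 2 + real k) / ((b + 1) / 2 + real k))"
proof -
  have "hw N a b (Suc (2*k)) = hw N a b (2*k) * ((1/2 + a/2 + real k) / (1/2 + b/2 + real k))"
    unfolding hw_def Let_def by (simp add: pochhammer_Suc ac_simps)
  moreover have "1/2 + a/2 = (a + 1) / 2" "1/2 + b/2 = (b + 1) / 2"
    by simp_all
  ultimately show ?thesis by simp
qed

lemma hP_rec: "hP N a b (Suc n) x = (x - hb a b n) * hP N a b n x - hu N a b n * hP N a b (n - 1) x"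
  by (cases n) (simp_all add: hu_def)

lemma hP_vanish_grid:
  assumes N: "N = Suc (2*J)" and "s \<le> N"
  shows "hP N a b (Suc N) (hy a b s) = 0"
proof -
  have "(hy a b s + 1)\<^sup>2 = node a b (real (s div 2))"
    using grid_node[of a b "s div 2"] by (cases "even s") (auto elim!: evenE oddE)
  moreover have "s div 2 \<le> J" using assms by simp
  ultimately show ?thesis
    using hP_even_odd[of N a b "Suc J" "hy a b s"] Rq_vanish[OF N] N by simp
qed

context
  fixes a b :: real
  assumes a: "a > -1" and b: "b > -1"
begin

lemma weight_pair:
  assumes "N = Suc (2*J)"
  shows "hw N a b (2*k) + hw N a b (Suc (2*k)) = nu J a b k"
proof -
  have d: "(b + 1) / 2 + real k > 0" using b by (simp add: add_pos_nonneg)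
  have "hw N a b (2*k) + hw N a b (2*k) * (((a + 1) / 2 + real k) / ((b + 1) / 2 + real k))
      = hw N a b (2*k) * ((2 * real k + psig a b) / ((b + 1) / 2 + real k))"
    using d by (simp add: psig_def field_simps)
  then show ?thesis
    unfolding weight_odd using weight_even[OF assms] by (simp add: nu_def)
qed

lemma weight_pos:
  assumes "N = Suc (2*J)" and "k \<le> J"
  shows "hw N a b (2*k) > 0" "hw N a b (Suc (2*k)) > 0"
proof -
  show even: "hw N a b (2*k) > 0"
    unfolding weight_even[OF assms(1)] using assms(2) wnum_pos[OF a b] wden_pos[OF a b] by simp
  have "((a + 1) / 2 + real k) / ((b + 1) / 2 + real k) > 0"
    using a b by (simp add: add_pos_nonneg)
  then show "hw N a b (Suc (2*k)) > 0"
    unfolding weight_odd using even by (intro mult_pos_pos)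
qed

lemma hP_even_moments:
  assumes N: "N = Suc (2*J)"
  shows "(\<Sum>s = 0..N. hw N a b s * hP N a b (2*q) (hy a b s)) = (if q = 0 then moment J a b 0 else 0)"
proof -
  have "(\<Sum>s = 0..N. hw N a b s * hP N a b (2*q) (hy a b s))
      = (\<Sum>k\<le>J. (hw N a b (2*k) + hw N a b (Suc (2*k))) * Rq (hu N a b) (a - b) q (node a b (real k)))"
    unfolding sum_pairs[OF N] hP_even_odd[THEN conjunct1] grid_node by (simp add: algebra_simps)
  also have "\<dots> = (\<Sum>k\<le>J. nu J a b k * Rq (hu N a b) (a - b) q (node a b (real k)))"
    unfolding weight_pair[OF N] ..
  also have "\<dots> = (if q = 0 then moment J a b 0 else 0)"
    using Rq_moments_vanish[OF a b N, of q] by (simp add: moment_def)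
  finally show ?thesis .
qed

lemma hP_odd_moments:
  assumes N: "N = Suc (2*J)"
  shows "(\<Sum>s = 0..N. hw N a b s * hP N a b (Suc (2*q)) (hy a b s)) = 0"
proof -
  have pair: "hw N a b (2*k) * (hy a b (2*k) + 1 + a - b)
      + hw N a b (Suc (2*k)) * (hy a b (Suc (2*k)) + 1 + a - b) = 0" for k
  proof -
    have "(b + 1) / 2 + real k > 0" using b by (simp add: add_pos_nonneg)
    then show ?thesis unfolding weight_odd hy_def by (simp add: field_simps)
  qed
  have "(\<Sum>s = 0..N. hw N a b s * hP N a b (Suc (2*q)) (hy a b s))
      = (\<Sum>k\<le>J. (hw N a b (2*k) * (hy a b (2*k) + 1 + a - b)
          + hw N a b (Suc (2*k)) * (hy a b (Suc (2*k)) + 1 + a - b)) * Sq (hu N a b) (a - b) q (node a b (real k)))"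
    unfolding sum_pairs[OF N] hP_even_odd[THEN conjunct2] grid_node by (simp add: algebra_simps)
  then show ?thesis unfolding pair by simp
qed

lemma hP_moments:
  assumes N: "N = Suc (2*J)"
  shows "(\<Sum>s = 0..N. hw N a b s * hP N a b n (hy a b s)) = (if n = 0 then moment J a b 0 else 0)"
proof (cases "even n")
  case True
  then obtain q where "n = 2*q" by (rule evenE)
  then show ?thesis using hP_even_moments[OF N, of q] by simp
next
  case False
  then obtain q where "n = Suc (2*q)" by (metis oddE add.commute plus_1_eq_Suc)
  then show ?thesis using hP_odd_moments[OF N, of q] by simp
qed
end

theorem mainTheorem3:
  fixes N :: nat and \<alpha> \<beta> :: real
  assumes "odd N" and "\<alpha> > -1" and "\<beta> > -1"
  shows "(\<forall>s \<le> (N - 1) div 2.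
            pochhammer (1/2 + \<beta>/2) (s + 1) \<noteq> 0
          \<and> pochhammer (real N / 2 + 3/2 + (\<alpha> + \<beta>)/2) s \<noteq> 0)
       \<and> (\<forall>s \<le> N. hw N \<alpha> \<beta> s > 0)
       \<and> (\<forall>n \<le> N. \<forall>m \<le> N.
            (\<Sum>s = 0..N. hw N \<alpha> \<beta> s * hP N \<alpha> \<beta> n (hy \<alpha> \<beta> s) * hP N \<alpha> \<beta> m (hy \<alpha> \<beta> s))
            = (if n = m then (\<Sum>s = 0..N. hw N \<alpha> \<beta> s) * (\<Prod>k = 1..n. hu N \<alpha> \<beta> k) else 0))
       \<and> (\<Sum>s = 0..N. hw N \<alpha> \<beta> s)
            = pochhammer (1 + (\<alpha> + \<beta>)/2) ((N + 1) div 2)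
              / pochhammer ((\<beta> + 1)/2) ((N + 1) div 2)"
proof -
  obtain J where N: "N = Suc (2*J)" using \<open>odd N\<close> by (metis oddE Suc_eq_plus1)
  note a = \<open>\<alpha> > -1\<close> and b = \<open>\<beta> > -1\<close>
  have kappa: "(\<Sum>s = 0..N. hw N \<alpha> \<beta> s) = moment J \<alpha> \<beta> 0"
    using hP_moments[OF a b N, of 0] by simp
  have "real N \<ge> 0" by simp
  then have params: "1/2 + \<beta>/2 > 0" "real N / 2 + 3/2 + (\<alpha> + \<beta>)/2 > 0"
    using a b by (simp_all add: field_simps)
  have nonzero: "pochhammer (1/2 + \<beta>/2) k \<noteq> 0" "pochhammer (real N / 2 + 3/2 + (\<alpha> + \<beta>)/2) k \<noteq> 0" for k
    using pochhammer_pos[OF params(1), of k] pochhammer_pos[OF params(2), of k] by simp_all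
  have weights: "hw N \<alpha> \<beta> s > 0" if "s \<le> N" for s
  proof -
    have "s = 2 * (s div 2) \<or> s = Suc (2 * (s div 2))" by presburger
    moreover have "s div 2 \<le> J" using that N by simp
    ultimately show ?thesis using weight_pos[OF a b N] by metis
  qed
  have orth: "(\<Sum>s = 0..N. hw N \<alpha> \<beta> s * hP N \<alpha> \<beta> n (hy \<alpha> \<beta> s) * hP N \<alpha> \<beta> m (hy \<alpha> \<beta> s))
      = (if n = m then moment J \<alpha> \<beta> 0 * (\<Prod>k = 1..n. hu N \<alpha> \<beta> k) else 0)" if "n \<le> N" "m \<le> N" for n m
    using that
    by (intro orthogonality_from_moments[where b = "hb \<alpha> \<beta>"] hP_rec hP_moments[OF a b N])
      (simp_all add: hu_def hP_vanish_grid[OF N])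
  have "(N + 1) div 2 = Suc J" "1 + (\<alpha> + \<beta>) / 2 = psig \<alpha> \<beta>"
    using N by (simp_all add: psig_def)
  then show ?thesis
    using nonzero weights orth kappa total_mass[OF a b, of J] by simp
qed

end
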